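(* Let a Riemann-Cartan geometry on a 4-manifold admit a one-dimensional group of affine frame symmetries generated by $\mathbf X$, and choose local coordinates $x^\mu=(x^{\tilde\alpha},\chi)$, $\tilde\alpha=1,2,3$, with $\mathbf X=\partial_\chi$, and $\mathcal L_{\mathbf X}\mathbf h^a=f(\chi)\lambda^a{}_b\mathbf h^b$ for a fixed Lorentz algebra element $\lambda$ (which, up to global Lorentz transformations, is one of $\mathbf h^1\wedge\mathbf h^4$, $\mathbf h^1\wedge\mathbf h^2+\mathbf h^2\wedge\mathbf h^4$, $\mathbf h^1\wedge\mathbf h^4+a_0\mathbf h^2\wedge\mathbf h^4$ ($a_0\in\mathbb R$ constant), $\mathbf h^2\wedge\mathbf h^3$, read as the two-form $\lambda_{ab}$, or zero). Then, after a local Lorentz transformation of the frame, the coframe and connection take the form $$\mathbf h^a=h^a{}_\alpha(x^{\tilde\alpha})\,dx^\alpha,\qquad \boldsymbol\omega^a{}_b=W^a{}_{bc}(x^{\tilde\alpha})\,\mathbf h^c-\mathbf h_c(\epsilon\chi)\,\lambda^a{}_b\,\mathbf h^c,$$ where the $h^a{}_\alpha$ and $W^a{}_{bc}$ (with $W_{abc}=-W_{bac}$) are functions independent of $\chi$ and $\epsilon\in\{0,1\}$; conversely every such pair admits $\partial_\chi$ as an affine frame symmetry. The case $\epsilon=0$ corresponds to a translational symmetry and $\epsilon=1$ to an isotropy.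
   Context: A Riemann-Cartan geometry: orthonormal coframe $\mathbf h^a=h^a{}_\mu dx^\mu$, dual frame $\mathbf h_a=h_a{}^\mu\partial_\mu$, metric $g=\eta_{ab}\mathbf h^a\mathbf h^b$ with $\eta=\mathrm{diag}(-1,1,1,1)$, metric-compatible connection one-form $\boldsymbol\omega^a{}_b=\omega^a{}_{bc}\mathbf h^c$ with $\omega_{abc}=-\omega_{bac}$. $\mathbf h_c(F)=h_c{}^\mu\partial_\mu F$. An affine frame symmetry is a vector field $\mathbf X$ with $\mathcal L_{\mathbf X}\mathbf h^a=\Lambda^a{}_b\mathbf h^b$ for some Lorentz-algebra-valued $\Lambda=f\lambda$ and $\mathcal L_{\mathbf X}\omega^a{}_{bc}=X^d\mathbf h_d(\omega^a{}_{bc})+\omega^d{}_{bc}\Lambda^a{}_d-\omega^a{}_{dc}\Lambda^d{}_b-\omega^a{}_{bd}\Lambda^d{}_c-\mathbf h_c(f)\lambda^a{}_b=0$. Under a local Lorentz transformation $\tilde{\mathbf h}^a=\Lambda^a{}_b\mathbf h^b$ the connection transforms as $\tilde{\boldsymbol\omega}=\Lambda\boldsymbol\omega\Lambda^{-1}+\Lambda\,d\Lambda^{-1}$. *)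

theory Defs
  imports "HOL-Analysis.Analysis"
begin

(* Local coordinates x = (x^0,x^1,x^2,x^3) :: real^4; the coordinate chi is x$3.
   Frame indices a :: 4, with eta = diag(-1,1,1,1) (index 0 timelike).
   A coframe is h :: real^4 => real^4^4 with  h x $ a $ mu = h^a_mu(x).
   A connection is given by its frame components  w x a b c = omega^a_{bc}(x). *)

definition eta :: "real^4^4" where
  "eta = (\<chi> i j. if i = j then (if i = 0 then -1 else 1) else 0)"

definition lorentz_alg :: "real^4^4 \<Rightarrow> bool" where
  "lorentz_alg l \<longleftrightarrow> transpose (eta ** l) = - (eta ** l)"

definition lorentz_mat :: "real^4^4 \<Rightarrow> bool" where
  "lorentz_mat L \<longleftrightarrow> transpose L ** eta ** L = eta"

definition pd :: "(real^4 \<Rightarrow> real) \<Rightarrow> 4 \<Rightarrow> real^4 \<Rightarrow> real" where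
  "pd F mu x = deriv (\<lambda>t. F (x + t *\<^sub>R axis mu 1)) 0"

(* dual frame: dual h x $ mu $ a = h_a^mu(x) *)
definition dual :: "(real^4 \<Rightarrow> real^4^4) \<Rightarrow> real^4 \<Rightarrow> real^4^4" where
  "dual h x = matrix_inv (h x)"

definition frame_deriv :: "(real^4 \<Rightarrow> real^4^4) \<Rightarrow> (real^4 \<Rightarrow> real) \<Rightarrow> 4 \<Rightarrow> real^4 \<Rightarrow> real" where
  "frame_deriv h F c x = (\<Sum>mu\<in>UNIV. dual h x $ mu $ c * pd F mu x)"

definition lower :: "(real^4 \<Rightarrow> 4 \<Rightarrow> 4 \<Rightarrow> 4 \<Rightarrow> real) \<Rightarrow> real^4 \<Rightarrow> 4 \<Rightarrow> 4 \<Rightarrow> 4 \<Rightarrow> real" where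
  "lower w x a b c = (\<Sum>e\<in>UNIV. eta $ a $ e * w x e b c)"

definition lie_coframe :: "(real^4 \<Rightarrow> real^4) \<Rightarrow> (real^4 \<Rightarrow> real^4^4) \<Rightarrow> real^4 \<Rightarrow> real^4^4" where
  "lie_coframe X h x = (\<chi> a mu. (\<Sum>nu\<in>UNIV. X x $ nu * pd (\<lambda>y. h y $ a $ mu) nu x)
                                + (\<Sum>nu\<in>UNIV. h x $ a $ nu * pd (\<lambda>y. X y $ nu) mu x))"

(* The connection part of the affine frame symmetry condition with Lambda = f lambda,
   written with the sign of Lambda consistent with L_X h^a = Lambda^a_b h^b and the
   stated transformation law of omega. *)
definition lie_conn :: "(real^4 \<Rightarrow> real^4) \<Rightarrow> (real^4 \<Rightarrow> real^4^4) \<Rightarrow> (real^4 \<Rightarrow> 4 \<Rightarrow> 4 \<Rightarrow> 4 \<Rightarrow> real)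
     \<Rightarrow> (real^4 \<Rightarrow> real) \<Rightarrow> real^4^4 \<Rightarrow> real^4 \<Rightarrow> 4 \<Rightarrow> 4 \<Rightarrow> 4 \<Rightarrow> real" where
  "lie_conn X h w f l x a b c =
     (\<Sum>mu\<in>UNIV. X x $ mu * pd (\<lambda>y. w y a b c) mu x)
     - (\<Sum>d\<in>UNIV. f x * l $ a $ d * w x d b c)
     + (\<Sum>d\<in>UNIV. w x a d c * (f x * l $ d $ b))
     + (\<Sum>d\<in>UNIV. w x a b d * (f x * l $ d $ c))
     + frame_deriv h f c x * l $ a $ b"

definition affine_frame_symmetry ::
  "(real^4) set \<Rightarrow> (real^4 \<Rightarrow> real^4^4) \<Rightarrow> (real^4 \<Rightarrow> 4 \<Rightarrow> 4 \<Rightarrow> 4 \<Rightarrow> real)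
     \<Rightarrow> (real^4 \<Rightarrow> real^4) \<Rightarrow> (real^4 \<Rightarrow> real) \<Rightarrow> real^4^4 \<Rightarrow> bool" where
  "affine_frame_symmetry D h w X f l \<longleftrightarrow>
     lorentz_alg l
     \<and> (\<forall>x\<in>D. lie_coframe X h x = f x *\<^sub>R (l ** h x))
     \<and> (\<forall>x\<in>D. \<forall>a b c. lie_conn X h w f l x a b c = 0)"

definition coord_conn :: "(real^4 \<Rightarrow> real^4^4) \<Rightarrow> (real^4 \<Rightarrow> 4 \<Rightarrow> 4 \<Rightarrow> 4 \<Rightarrow> real) \<Rightarrow> real^4 \<Rightarrow> 4 \<Rightarrow> real^4^4" where
  "coord_conn h w x mu = (\<chi> a b. \<Sum>c\<in>UNIV. w x a b c * h x $ c $ mu)"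

(* local Lorentz transformation: h~ = L h, omega~ = L omega L^-1 + L d(L^-1),
   returned in frame components w.r.t. the new frame h~ *)
definition gauge_coframe :: "(real^4 \<Rightarrow> real^4^4) \<Rightarrow> (real^4 \<Rightarrow> real^4^4) \<Rightarrow> real^4 \<Rightarrow> real^4^4" where
  "gauge_coframe L h x = L x ** h x"

definition gauge_conn :: "(real^4 \<Rightarrow> real^4^4) \<Rightarrow> (real^4 \<Rightarrow> real^4^4) \<Rightarrow> (real^4 \<Rightarrow> 4 \<Rightarrow> 4 \<Rightarrow> 4 \<Rightarrow> real)
     \<Rightarrow> real^4 \<Rightarrow> 4 \<Rightarrow> 4 \<Rightarrow> 4 \<Rightarrow> real" where
  "gauge_conn L h w x a b c =
     (\<Sum>mu\<in>UNIV. ((L x ** coord_conn h w x mu ** matrix_inv (L x)) $ a $ b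
                   + (\<Sum>d\<in>UNIV. L x $ a $ d * pd (\<lambda>y. matrix_inv (L y) $ d $ b) mu x))
                 * dual (gauge_coframe L h) x $ mu $ c)"

definition chi_shift :: "real^4 \<Rightarrow> real \<Rightarrow> real^4" where
  "chi_shift x t = x + t *\<^sub>R axis 3 1"

definition chi_indep :: "(real^4) set \<Rightarrow> (real^4 \<Rightarrow> 'b) \<Rightarrow> bool" where
  "chi_indep D F \<longleftrightarrow> (\<forall>x\<in>D. \<forall>t. chi_shift x t \<in> D \<longrightarrow> F (chi_shift x t) = F x)"

end

theory Submission
  imports Defs
begin

text \<open>
  Write \<open>\<Omega>\<^sub>\<mu> = \<omega>\<^sub>c h\<^sup>c\<^sub>\<mu>\<close> for the coordinate components of the connection and let \<open>G\<close> be a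
  primitive of \<open>g\<close>. The coframe condition reads \<open>\<partial>\<^sub>\<chi> h = g(\<chi>) \<lambda> h\<close>, so the local Lorentz
  transformation \<open>L = exp(-G(\<chi>) \<lambda>)\<close> (Lorentz since \<open>\<lambda>\<close> lies in the Lorentz algebra, and commuting
  with \<open>\<lambda>\<close>) makes the coframe \<open>L h\<close> independent of \<open>\<chi>\<close>. The connection condition reads
  \<open>\<partial>\<^sub>\<chi> \<Omega>\<^sub>\<mu> = g [\<lambda>, \<Omega>\<^sub>\<mu>] - g' \<delta>\<^sup>\<chi>\<^sub>\<mu> \<lambda>\<close>, and the transformed coordinate connection
  \<open>L \<Omega>\<^sub>\<mu> L\<^sup>-\<^sup>1 + L \<partial>\<^sub>\<mu> L\<^sup>-\<^sup>1 = L \<Omega>\<^sub>\<mu> L\<^sup>-\<^sup>1 + g \<delta>\<^sup>\<chi>\<^sub>\<mu> \<lambda>\<close> then has vanishing \<open>\<chi>\<close>-derivative too;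
  metric compatibility survives because \<open>L\<close> is Lorentz. With the sign convention of
  \<open>lie_conn\<close> the inhomogeneous term is absorbed completely by \<open>L\<close>, so \<open>\<epsilon> = 0\<close> always works.
  Conversely, \<open>\<chi>\<close>-independent data admit \<open>\<partial>\<^sub>\<chi>\<close> as a symmetry with \<open>\<Lambda> = 0\<close>.
\<close>

section \<open>Matrix-valued functions of a real variable\<close>

definition has_matrix_derivative :: "(real \<Rightarrow> real^'n^'m) \<Rightarrow> real^'n^'m \<Rightarrow> real \<Rightarrow> bool" where
  "has_matrix_derivative A A' t \<longleftrightarrow> (\<forall>i j. ((\<lambda>s. A s $ i $ j) has_real_derivative A' $ i $ j) (at t))"

lemma has_matrix_derivative_mult:
  fixes A :: "real \<Rightarrow> real^'n^'m" and B :: "real \<Rightarrow> real^'p^'n"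
  assumes "has_matrix_derivative A A' t" "has_matrix_derivative B B' t"
  shows "has_matrix_derivative (\<lambda>s. A s ** B s) (A' ** B t + A t ** B') t"
  unfolding has_matrix_derivative_def
proof (intro allI)
  fix i j
  have "((\<lambda>s. \<Sum>k\<in>UNIV. A s $ i $ k * B s $ k $ j) has_real_derivative
          (\<Sum>k\<in>UNIV. A' $ i $ k * B t $ k $ j + A t $ i $ k * B' $ k $ j)) (at t)"
  proof (rule DERIV_sum)
    fix k
    have a: "((\<lambda>s. A s $ i $ k) has_real_derivative A' $ i $ k) (at t)"
      and b: "((\<lambda>s. B s $ k $ j) has_real_derivative B' $ k $ j) (at t)"
      using assms unfolding has_matrix_derivative_def by auto
    show "((\<lambda>s. A s $ i $ k * B s $ k $ j) has_real_derivative
          A' $ i $ k * B t $ k $ j + A t $ i $ k * B' $ k $ j) (at t)"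
      using DERIV_mult'[OF a b] by (simp add: add.commute)
  qed
  then show "((\<lambda>s. (A s ** B s) $ i $ j) has_real_derivative (A' ** B t + A t ** B') $ i $ j) (at t)"
    by (simp add: matrix_matrix_mult_def sum.distrib)
qed

lemma has_matrix_derivative_add:
  assumes "has_matrix_derivative A A' t" "has_matrix_derivative B B' t"
  shows "has_matrix_derivative (\<lambda>s. A s + B s) (A' + B') t"
  using assms unfolding has_matrix_derivative_def by (simp add: DERIV_add)

lemma has_matrix_derivative_scaleR:
  assumes "(\<phi> has_real_derivative p) (at t)" "has_matrix_derivative A A' t"
  shows "has_matrix_derivative (\<lambda>s. \<phi> s *\<^sub>R A s) (p *\<^sub>R A t + \<phi> t *\<^sub>R A') t"
  using assms unfolding has_matrix_derivative_def
  by (auto intro!: DERIV_mult[THEN DERIV_cong] simp: algebra_simps)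

lemma has_matrix_derivative_const: "has_matrix_derivative (\<lambda>s. C) 0 t"
  unfolding has_matrix_derivative_def by simp

lemma has_matrix_derivative_transpose:
  assumes "has_matrix_derivative A A' t"
  shows "has_matrix_derivative (\<lambda>s. transpose (A s)) (transpose A') t"
  using assms unfolding has_matrix_derivative_def transpose_def by simp

lemma has_matrix_derivative_chain:
  assumes "has_matrix_derivative A A' (\<phi> t)" "(\<phi> has_real_derivative p) (at t)"
  shows "has_matrix_derivative (\<lambda>s. A (\<phi> s)) (p *\<^sub>R A') t"
  unfolding has_matrix_derivative_def
proof (intro allI)
  fix i j
  have "((\<lambda>s. A s $ i $ j) has_real_derivative A' $ i $ j) (at (\<phi> t))"
    using assms(1) unfolding has_matrix_derivative_def by blast
  from DERIV_chain2[OF this assms(2)]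
  show "((\<lambda>s. A (\<phi> s) $ i $ j) has_real_derivative (p *\<^sub>R A') $ i $ j) (at t)"
    by (simp add: mult.commute)
qed

lemma has_matrix_derivative_transform_within_open:
  assumes "has_matrix_derivative B B' t" "open S" "t \<in> S" "\<And>s. s \<in> S \<Longrightarrow> A s = B s"
  shows "has_matrix_derivative A B' t"
  unfolding has_matrix_derivative_def
proof (intro allI)
  fix i j
  have "((\<lambda>s. B s $ i $ j) has_real_derivative B' $ i $ j) (at t)"
    using assms(1) unfolding has_matrix_derivative_def by blast
  then show "((\<lambda>s. A s $ i $ j) has_real_derivative B' $ i $ j) (at t)"
    by (rule has_field_derivative_transform_within_open[OF _ assms(2,3)]) (simp add: assms(4))
qed

lemma has_matrix_derivative_zero_constant:
  assumes "convex S" "\<And>t. t \<in> S \<Longrightarrow> has_matrix_derivative A 0 t" "s \<in> S" "t \<in> S"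
  shows "A s = A t"
proof -
  have "A s $ i $ j = A t $ i $ j" for i j
  proof -
    have d: "((\<lambda>s. A s $ i $ j) has_real_derivative 0) (at x within S)" if "x \<in> S" for x
    proof -
      have "((\<lambda>s. A s $ i $ j) has_real_derivative 0 $ i $ j) (at x)"
        using assms(2)[OF that] unfolding has_matrix_derivative_def by blast
      then show ?thesis by (simp add: has_field_derivative_at_within)
    qed
    obtain c where "\<And>x. x \<in> S \<Longrightarrow> A x $ i $ j = c"
      using has_field_derivative_zero_constant[OF assms(1) d] by blast
    then show ?thesis using assms by auto
  qed
  then show ?thesis by (simp add: vec_eq_iff)
qed

lemma matrix_mul_uminus_right [simp]: "(A::real^'n^'m) ** (- B) = - (A ** B)"
  by (simp add: vec_eq_iff matrix_matrix_mult_def sum_negf)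

lemma matrix_mul_uminus_left [simp]: "(- A::real^'n^'m) ** B = - (A ** B)"
  by (simp add: vec_eq_iff matrix_matrix_mult_def sum_negf)

lemma matrix_add_rdistrib: "((A::real^'n^'m) + B) ** C = A ** C + B ** C"
  by (simp add: vec_eq_iff matrix_matrix_mult_def sum.distrib algebra_simps)

lemma matrix_diff_rdistrib: "((A::real^'n^'m) - B) ** C = A ** C - B ** C"
  by (simp add: vec_eq_iff matrix_matrix_mult_def sum_subtractf algebra_simps)

lemma matrix_diff_ldistrib: "(C::real^'n^'m) ** (A - B) = C ** A - C ** B"
  by (simp add: vec_eq_iff matrix_matrix_mult_def sum_subtractf algebra_simps)

lemma matrix_scaleR_right: "(A::real^'n^'m) ** (k *\<^sub>R B) = k *\<^sub>R (A ** B)"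
  by (simp add: vec_eq_iff matrix_matrix_mult_def sum_distrib_left mult_ac)

lemmas matrix_ring_simps = matrix_add_ldistrib matrix_add_rdistrib matrix_diff_rdistrib
  matrix_diff_ldistrib scalar_matrix_assoc[symmetric] matrix_scaleR_right matrix_mul_assoc

lemma transpose_add: "transpose (A + B) = transpose A + transpose (B::real^'n^'m)"
  by (simp add: transpose_def vec_eq_iff)

lemma matrix_inv_inverse:
  fixes A :: "real^'n^'n"
  assumes "invertible A"
  shows "A ** matrix_inv A = mat 1" "matrix_inv A ** A = mat 1"
  using assms unfolding invertible_def matrix_inv_def by (metis (mono_tags, lifting) someI_ex)+

lemma matrix_inv_unique:
  fixes A B :: "real^'n^'n"
  assumes "A ** B = mat 1" "B ** A = mat 1"
  shows "matrix_inv A = B"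
proof -
  have "invertible A" using assms unfolding invertible_def by blast
  then have "matrix_inv A = matrix_inv A ** (A ** B)" using assms by simp
  also have "\<dots> = B" using matrix_inv_inverse(2)[OF \<open>invertible A\<close>] by (simp add: matrix_mul_assoc)
  finally show ?thesis .
qed

lemma eta_transpose [simp]: "transpose eta = eta"
  by (simp add: eta_def transpose_def vec_eq_iff)

lemma eta_antisym_congruence:
  fixes X P :: "real^'n^'n"
  assumes "transpose X = - X"
  shows "transpose (transpose P ** X ** P) = - (transpose P ** X ** P)"
  using assms by (simp add: matrix_transpose_mul matrix_mul_assoc)

section \<open>The matrix exponential\<close>

definition mat_pow :: "real^'n^'n \<Rightarrow> nat \<Rightarrow> real^'n^'n" where
  "mat_pow l n = ((\<lambda>M. l ** M) ^^ n) (mat 1)"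

lemma mat_pow_0 [simp]: "mat_pow l 0 = mat 1"
  by (simp add: mat_pow_def)

lemma mat_pow_Suc: "mat_pow l (Suc n) = l ** mat_pow l n"
  by (simp add: mat_pow_def)

lemma mat_pow_Suc': "mat_pow l (Suc n) = mat_pow l n ** l"
  by (induction n) (simp_all add: mat_pow_Suc matrix_mul_assoc)

definition mat_abs_sum :: "real^'n^'n \<Rightarrow> real" where
  "mat_abs_sum l = (\<Sum>i\<in>UNIV. \<Sum>k\<in>UNIV. \<bar>l $ i $ k\<bar>)"

lemma mat_abs_sum_nonneg: "0 \<le> mat_abs_sum l"
  unfolding mat_abs_sum_def by (intro sum_nonneg) auto

lemma row_abs_sum_le_mat_abs_sum: "(\<Sum>k\<in>UNIV. \<bar>l $ i $ k\<bar>) \<le> mat_abs_sum l"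
  unfolding mat_abs_sum_def
  by (rule member_le_sum[of i UNIV "\<lambda>i. \<Sum>k\<in>UNIV. \<bar>l $ i $ k\<bar>"]) (auto intro: sum_nonneg)

lemma abs_mat_pow_le: "\<bar>mat_pow l n $ i $ j\<bar> \<le> mat_abs_sum l ^ n"
proof (induction n arbitrary: i j)
  case 0
  then show ?case by (simp add: mat_def)
next
  case (Suc n)
  have "\<bar>mat_pow l (Suc n) $ i $ j\<bar> = \<bar>\<Sum>k\<in>UNIV. l $ i $ k * mat_pow l n $ k $ j\<bar>"
    by (simp add: mat_pow_Suc matrix_matrix_mult_def)
  also have "\<dots> \<le> (\<Sum>k\<in>UNIV. \<bar>l $ i $ k\<bar> * \<bar>mat_pow l n $ k $ j\<bar>)"
    by (rule order_trans[OF sum_abs]) (simp add: abs_mult)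
  also have "\<dots> \<le> (\<Sum>k\<in>UNIV. \<bar>l $ i $ k\<bar> * mat_abs_sum l ^ n)"
    by (intro sum_mono mult_left_mono Suc.IH) auto
  also have "\<dots> = (\<Sum>k\<in>UNIV. \<bar>l $ i $ k\<bar>) * mat_abs_sum l ^ n"
    by (simp add: sum_distrib_right)
  also have "\<dots> \<le> mat_abs_sum l * mat_abs_sum l ^ n"
    by (intro mult_right_mono row_abs_sum_le_mat_abs_sum) (simp add: mat_abs_sum_nonneg)
  finally show ?case by simp
qed

lemma summable_mat_pow_series: "summable (\<lambda>n. mat_pow l n $ i $ j / fact n * y ^ n)"
proof (rule summable_comparison_test')
  show "summable (\<lambda>n. inverse (fact n) * (mat_abs_sum l * \<bar>y\<bar>) ^ n)"
    by (rule summable_exp)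
  fix n :: nat
  have "\<bar>mat_pow l n $ i $ j\<bar> * \<bar>y\<bar> ^ n / fact n \<le> mat_abs_sum l ^ n * \<bar>y\<bar> ^ n / fact n"
    by (intro divide_right_mono mult_right_mono abs_mat_pow_le) auto
  then show "norm (mat_pow l n $ i $ j / fact n * y ^ n) \<le> inverse (fact n) * (mat_abs_sum l * \<bar>y\<bar>) ^ n"
    by (simp add: abs_mult power_abs power_mult_distrib field_simps)
qed

definition mat_exp :: "real^'n^'n \<Rightarrow> real \<Rightarrow> real^'n^'n" where
  "mat_exp l s = (\<chi> i j. \<Sum>n. mat_pow l n $ i $ j / fact n * s ^ n)"

lemma mat_exp_mult_left:
  "(M ** mat_exp l s) $ i $ j = (\<Sum>n. (M ** mat_pow l n) $ i $ j / fact n * s ^ n)"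
proof -
  have "(M ** mat_exp l s) $ i $ j = (\<Sum>k\<in>UNIV. M $ i $ k * (\<Sum>n. mat_pow l n $ k $ j / fact n * s ^ n))"
    by (simp add: matrix_matrix_mult_def mat_exp_def)
  also have "\<dots> = (\<Sum>k\<in>UNIV. \<Sum>n. M $ i $ k * (mat_pow l n $ k $ j / fact n * s ^ n))"
    by (intro sum.cong refl suminf_mult[symmetric] summable_mat_pow_series)
  also have "\<dots> = (\<Sum>n. \<Sum>k\<in>UNIV. M $ i $ k * (mat_pow l n $ k $ j / fact n * s ^ n))"
    by (intro suminf_sum[symmetric] summable_mult summable_mat_pow_series)
  also have "\<dots> = (\<Sum>n. (M ** mat_pow l n) $ i $ j / fact n * s ^ n)"
    by (rule suminf_cong)
       (simp add: matrix_matrix_mult_def sum_distrib_right sum_divide_distrib mult.assoc)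
  finally show ?thesis .
qed

lemma mat_exp_mult_right:
  "(mat_exp l s ** M) $ i $ j = (\<Sum>n. (mat_pow l n ** M) $ i $ j / fact n * s ^ n)"
proof -
  have "(mat_exp l s ** M) $ i $ j = (\<Sum>k\<in>UNIV. (\<Sum>n. mat_pow l n $ i $ k / fact n * s ^ n) * M $ k $ j)"
    by (simp add: matrix_matrix_mult_def mat_exp_def)
  also have "\<dots> = (\<Sum>k\<in>UNIV. \<Sum>n. mat_pow l n $ i $ k / fact n * s ^ n * M $ k $ j)"
    by (intro sum.cong refl suminf_mult2 summable_mat_pow_series)
  also have "\<dots> = (\<Sum>n. \<Sum>k\<in>UNIV. mat_pow l n $ i $ k / fact n * s ^ n * M $ k $ j)"
    by (intro suminf_sum[symmetric] summable_mult2 summable_mat_pow_series)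
  also have "\<dots> = (\<Sum>n. (mat_pow l n ** M) $ i $ j / fact n * s ^ n)"
    by (rule suminf_cong)
       (simp add: matrix_matrix_mult_def sum_distrib_right sum_distrib_left sum_divide_distrib mult_ac)
  finally show ?thesis .
qed

lemma mat_exp_commute: "l ** mat_exp l s = mat_exp l s ** l"
  by (simp add: vec_eq_iff mat_exp_mult_left mat_exp_mult_right flip: mat_pow_Suc mat_pow_Suc')

lemma mat_exp_zero [simp]: "mat_exp l 0 = mat 1"
proof -
  have "(\<Sum>n. mat_pow l n $ i $ j / fact n * 0 ^ n) = mat 1 $ i $ j" for i j
    using powser_zero[of "\<lambda>n. mat_pow l n $ i $ j / fact n"] by simp
  then show ?thesis by (simp add: mat_exp_def vec_eq_iff)
qed

lemma has_matrix_derivative_mat_exp: "has_matrix_derivative (mat_exp l) (l ** mat_exp l s) s"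
  unfolding has_matrix_derivative_def
proof (intro allI)
  fix i j
  have "diffs (\<lambda>n. mat_pow l n $ i $ j / fact n) n = (l ** mat_pow l n) $ i $ j / fact n" for n
    by (simp add: diffs_def mat_pow_Suc fact_Suc del: of_nat_Suc)
  then have "(l ** mat_exp l s) $ i $ j = (\<Sum>n. diffs (\<lambda>n. mat_pow l n $ i $ j / fact n) n * s ^ n)"
    unfolding mat_exp_mult_left by simp
  moreover have "(\<lambda>s. mat_exp l s $ i $ j) = (\<lambda>x. \<Sum>n. mat_pow l n $ i $ j / fact n * x ^ n)"
    by (simp add: mat_exp_def)
  ultimately show "((\<lambda>s. mat_exp l s $ i $ j) has_real_derivative (l ** mat_exp l s) $ i $ j) (at s)"
    using termdiffs_strong_converges_everywhere[OF summable_mat_pow_series] by simp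
qed

lemma mat_exp_minus: "mat_exp l s ** mat_exp l (- s) = mat 1"
proof -
  let ?P = "\<lambda>s. mat_exp l s ** mat_exp l (- s)"
  have "has_matrix_derivative ?P 0 t" for t
  proof -
    have "has_matrix_derivative (\<lambda>s. mat_exp l (- s)) ((-1) *\<^sub>R (l ** mat_exp l (- t))) t"
      by (rule has_matrix_derivative_chain[OF has_matrix_derivative_mat_exp])
         (auto intro!: derivative_eq_intros)
    from has_matrix_derivative_mult[OF has_matrix_derivative_mat_exp[of l] this]
    have "has_matrix_derivative ?P (l ** mat_exp l t ** mat_exp l (- t)
        - mat_exp l t ** l ** mat_exp l (- t)) t"
      by (simp add: matrix_scalar_ac matrix_mul_assoc)
    then show ?thesis
      by (simp add: matrix_mul_assoc mat_exp_commute)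
  qed
  then have "?P s = ?P 0"
    by (intro has_matrix_derivative_zero_constant[of UNIV]) auto
  then show ?thesis by simp
qed

lemma lorentz_mat_mat_exp:
  assumes "lorentz_alg l"
  shows "lorentz_mat (mat_exp l s)"
proof -
  let ?Q = "\<lambda>s. transpose (mat_exp l s) ** eta ** mat_exp l s"
  have al: "transpose l ** eta = - (eta ** l)"
    using assms unfolding lorentz_alg_def by (simp add: matrix_transpose_mul)
  have "has_matrix_derivative ?Q 0 t" for t
  proof -
    let ?E = "mat_exp l t"
    have "has_matrix_derivative ?Q ((transpose (l ** ?E) ** eta + transpose ?E ** 0) ** ?E
            + (transpose ?E ** eta) ** (l ** ?E)) t"
      by (intro has_matrix_derivative_mult has_matrix_derivative_transpose
          has_matrix_derivative_mat_exp has_matrix_derivative_const)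
    moreover have "(transpose (l ** ?E) ** eta) ** ?E = transpose ?E ** (transpose l ** eta) ** ?E"
      by (simp add: matrix_transpose_mul matrix_mul_assoc)
    moreover have "\<dots> = - (transpose ?E ** (eta ** l) ** ?E)"
      by (simp add: al)
    ultimately show ?thesis
      by (simp add: matrix_mul_assoc)
  qed
  then have "?Q s = ?Q 0"
    by (intro has_matrix_derivative_zero_constant[of UNIV]) auto
  then show ?thesis by (simp add: lorentz_mat_def)
qed

section \<open>Coordinate derivatives and \<open>\<chi>\<close>-independence\<close>

lemma chi_shift_nth_3: "chi_shift x s $ 3 = x $ 3 + s"
  by (simp add: chi_shift_def axis_def)

lemma chi_shift_0 [simp]: "chi_shift x 0 = x"
  by (simp add: chi_shift_def)

lemma open_chi_slice: "open D \<Longrightarrow> open {s. chi_shift x s \<in> D}"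
proof -
  assume "open D"
  moreover have "continuous (at s) (chi_shift x)" for s
    unfolding chi_shift_def by (intro continuous_intros)
  ultimately have "open (chi_shift x -` D)" by (rule continuous_open_vimage)
  then show ?thesis by (simp add: vimage_def)
qed

lemma pd_has_real_derivative:
  assumes "F differentiable (at x)"
  shows "((\<lambda>t. F (x + t *\<^sub>R axis mu 1)) has_real_derivative pd F mu x) (at 0)"
proof -
  have "(\<lambda>t::real. x + t *\<^sub>R axis mu (1::real)) differentiable (at 0)"
    by (intro derivative_intros)
  moreover have "F differentiable (at ((\<lambda>t::real. x + t *\<^sub>R axis mu (1::real)) 0))"
    using assms by simp
  ultimately have "(F \<circ> (\<lambda>t::real. x + t *\<^sub>R axis mu (1::real))) differentiable (at 0)"
    by (rule differentiable_chain_at)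
  then show ?thesis
    unfolding pd_def by (simp add: o_def DERIV_deriv_iff_real_differentiable)
qed

lemma has_real_derivative_chi_shift:
  assumes "F differentiable (at (chi_shift x t))"
  shows "((\<lambda>s. F (chi_shift x s)) has_real_derivative pd F 3 (chi_shift x t)) (at t)"
proof -
  have "((\<lambda>u. F (chi_shift x t + u *\<^sub>R axis 3 1)) has_real_derivative pd F 3 (chi_shift x t)) (at 0)"
    by (rule pd_has_real_derivative[OF assms])
  moreover have "(\<lambda>u. F (chi_shift x t + u *\<^sub>R axis 3 1)) = (\<lambda>u. F (chi_shift x (u + t)))"
    by (simp add: chi_shift_def algebra_simps)
  ultimately show ?thesis
    using DERIV_shift[of "\<lambda>s. F (chi_shift x s)" _ 0 t] by simp
qed

lemma pd_const [simp]: "pd (\<lambda>y. c) mu x = 0"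
  unfolding pd_def by (simp add: DERIV_imp_deriv)

lemma pd_comp_chi:
  fixes \<phi> :: "real \<Rightarrow> real"
  assumes "\<phi> differentiable (at (x $ 3))"
  shows "pd (\<lambda>y. \<phi> (y $ 3)) mu x = (if mu = 3 then deriv \<phi> (x $ 3) else 0)"
proof (cases "mu = 3")
  case True
  have "DERIV \<phi> (0 + x $ 3) :> deriv \<phi> (x $ 3)"
    using assms by (simp add: DERIV_deriv_iff_real_differentiable)
  then have "((\<lambda>t. \<phi> (t + x $ 3)) has_real_derivative deriv \<phi> (x $ 3)) (at 0)"
    by (simp only: DERIV_shift)
  then show ?thesis
    using True unfolding pd_def by (simp add: add.commute DERIV_imp_deriv)
next
  case False
  then have "axis mu (1::real) $ 3 = 0"
    by (simp add: axis_def)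
  then show ?thesis using False unfolding pd_def by (simp add: DERIV_imp_deriv)
qed

lemma pd_scaled_chi: "pd (\<lambda>y::real^4. \<epsilon> * y $ 3) mu x = (if mu = 3 then \<epsilon> else 0)"
proof -
  have d: "((\<lambda>s. \<epsilon> * s) has_real_derivative \<epsilon>) (at (x $ 3))"
    by (auto intro!: derivative_eq_intros)
  then have "(\<lambda>s. \<epsilon> * s) differentiable (at (x $ 3))"
    using real_differentiable_def by blast
  from pd_comp_chi[OF this, of mu] show ?thesis
    using DERIV_imp_deriv[OF d] by simp
qed

lemma pd_chi_eq_0_if_chi_indep:
  assumes "open D" "chi_indep D F" "x \<in> D"
  shows "pd F 3 x = 0"
proof -
  obtain e where e: "e > 0" "ball x e \<subseteq> D" using assms openE by blast
  have eq: "F (x + t *\<^sub>R axis 3 1) = F x" if "t \<in> ball 0 e" for t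
  proof -
    have "chi_shift x t \<in> ball x e"
      using that by (simp add: chi_shift_def dist_norm norm_axis_1)
    then show ?thesis using e assms(2,3) unfolding chi_indep_def chi_shift_def by blast
  qed
  have "((\<lambda>t. F x) has_real_derivative 0) (at 0)" by simp
  then have "((\<lambda>t. F (x + t *\<^sub>R axis 3 1)) has_real_derivative 0) (at 0)"
    by (rule has_field_derivative_transform_within_open[of _ _ _ "ball 0 e"]) (use e eq in auto)
  then show ?thesis unfolding pd_def by (rule DERIV_imp_deriv)
qed

lemma chi_indep_comp: "chi_indep D F \<Longrightarrow> chi_indep D (\<lambda>y. G (F y))"
  unfolding chi_indep_def by auto

lemma chi_indep_pair: "chi_indep D F \<Longrightarrow> chi_indep D G \<Longrightarrow> chi_indep D (\<lambda>y. (F y, G y))"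
  unfolding chi_indep_def by auto

lemma chi_indep_if_slice_derivative_zero:
  assumes slices: "\<forall>x\<in>D. is_interval {t. chi_shift x t \<in> D}"
    and deriv: "\<And>x s. chi_shift x s \<in> D \<Longrightarrow> has_matrix_derivative (\<lambda>s. F (chi_shift x s)) 0 s"
  shows "chi_indep D F"
  unfolding chi_indep_def
proof (intro ballI allI impI)
  fix x t assume x: "x \<in> D" and t: "chi_shift x t \<in> D"
  have "convex {s. chi_shift x s \<in> D}"
    using slices x is_interval_convex by blast
  from has_matrix_derivative_zero_constant[OF this, of "\<lambda>s. F (chi_shift x s)" t 0]
  show "F (chi_shift x t) = F x"
    using deriv x t by simp
qed

section \<open>Primitives on open sets of reals\<close>

lemma exists_primitive_on_open:
  fixes g :: "real \<Rightarrow> real"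
  assumes U: "open U" and g: "continuous_on U g"
  shows "\<exists>G. \<forall>s\<in>U. (G has_real_derivative g s) (at s)"
proof -
  define base where "base s = (SOME p. p \<in> connected_component_set U s)" for s
  define G where "G s = (LBINT y=base s..s. g y)" for s
  have "(G has_real_derivative g s) (at s)" if s: "s \<in> U" for s
  proof -
    let ?C = "connected_component_set U s"
    define a where "a = base s"
    have sC: "s \<in> ?C" using s by (simp add: connected_component_refl)
    then have aC: "a \<in> ?C" unfolding a_def base_def by (rule someI)
    have base_eq: "base u = a" if "u \<in> ?C" for u
      unfolding a_def base_def using connected_component_eq[OF that] by simp
    obtain e where e: "e > 0" "ball s e \<subseteq> ?C"
      using open_connected_component[OF U] sC openE by blast
    define p where "p = min a (s - e/2)"
    define q where "q = max a (s + e/2)"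
    have "s - e/2 \<in> ball s e" "s + e/2 \<in> ball s e" using e by (auto simp: dist_real_def)
    then have "s - e/2 \<in> ?C" "s + e/2 \<in> ?C" using e(2) by blast+
    then have pC: "p \<in> ?C" and qC: "q \<in> ?C" using aC by (auto simp: p_def q_def min_def max_def)
    have "is_interval ?C" by (simp add: is_interval_connected_1)
    from mem_is_interval_1_I[OF this pC qC] have sub: "{p..q} \<subseteq> ?C" by auto
    have pq: "p < s" "s < q" "p \<le> a" "a \<le> q" using e by (auto simp: p_def q_def)
    have "continuous_on {p..q} g"
      using g sub connected_component_subset continuous_on_subset by blast
    then have "((\<lambda>u. LBINT y=a..u. g y) has_vector_derivative g s) (at s within {p..q})"
      using pq by (intro interval_integral_FTC2) auto
    then have "((\<lambda>u. LBINT y=a..u. g y) has_real_derivative g s) (at s)"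
      using pq by (simp add: has_real_derivative_iff_has_vector_derivative at_within_Icc_at)
    moreover have "G u = (LBINT y=a..u. g y)" if "u \<in> {p<..<q}" for u
    proof -
      have "u \<in> {p..q}" using that by auto
      then have "u \<in> ?C" using sub by blast
      then show ?thesis by (simp add: G_def base_eq)
    qed
    ultimately show ?thesis
      using has_field_derivative_transform_within_open[of _ _ _ "{p<..<q}"] pq by force
  qed
  then show ?thesis by blast
qed

section \<open>Connection algebra\<close>

lemma sum_axis_mult: "(\<Sum>nu\<in>UNIV. axis k (1::real) $ nu * F nu) = F k"
proof -
  have "(\<Sum>nu\<in>UNIV. axis k (1::real) $ nu * F nu) = (\<Sum>nu\<in>UNIV. if nu = k then F nu else 0)"
    by (rule sum.cong) (auto simp: axis_def)
  then show ?thesis by simp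
qed

lemma sum_mult_sum_swap:
  "(\<Sum>c\<in>UNIV. (\<Sum>d\<in>UNIV. F d c) * G c) = (\<Sum>d\<in>UNIV. \<Sum>c\<in>UNIV. F d c * (G c :: real))"
  by (simp add: sum_distrib_right) (rule sum.swap)

lemma lie_coframe_chi:
  "lie_coframe (\<lambda>x. axis 3 1) h y $ a $ mu = pd (\<lambda>y. h y $ a $ mu) 3 y"
  unfolding lie_coframe_def by (simp add: sum_axis_mult)

lemma lie_conn_chi:
  "lie_conn (\<lambda>x. axis 3 1) h w f l y a b c =
     pd (\<lambda>y. w y a b c) 3 y
     - (\<Sum>d\<in>UNIV. f y * l $ a $ d * w y d b c)
     + (\<Sum>d\<in>UNIV. w y a d c * (f y * l $ d $ b))
     + (\<Sum>d\<in>UNIV. w y a b d * (f y * l $ d $ c))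
     + frame_deriv h f c y * l $ a $ b"
  unfolding lie_conn_def by (simp add: sum_axis_mult)

lemma lower_antisym_if_eta_antisym:
  assumes W: "\<And>a b c. W x a b c = (\<Sum>mu\<in>UNIV. M mu $ a $ b * K $ mu $ c)"
    and M: "\<And>mu. transpose (eta ** M mu) = - (eta ** M mu)"
  shows "lower W x a b c = - lower W x b a c"
proof -
  have l: "lower W x a b c = (\<Sum>mu\<in>UNIV. (eta ** M mu) $ a $ b * K $ mu $ c)" for a b
  proof -
    have "lower W x a b c = (\<Sum>e\<in>UNIV. \<Sum>mu\<in>UNIV. eta $ a $ e * (M mu $ e $ b * K $ mu $ c))"
      unfolding lower_def W by (simp add: sum_distrib_left)
    also have "\<dots> = (\<Sum>mu\<in>UNIV. \<Sum>e\<in>UNIV. eta $ a $ e * (M mu $ e $ b * K $ mu $ c))"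
      by (rule sum.swap)
    also have "\<dots> = (\<Sum>mu\<in>UNIV. (eta ** M mu) $ a $ b * K $ mu $ c)"
      by (simp add: matrix_matrix_mult_def sum_distrib_right mult.assoc)
    finally show ?thesis .
  qed
  have e: "(eta ** M mu) $ a $ b = - (eta ** M mu) $ b $ a" for mu
    using arg_cong[OF M[of mu], of "\<lambda>X. X $ b $ a"] by (simp add: transpose_def)
  show ?thesis unfolding l by (simp add: e sum_negf)
qed

lemma eta_coord_conn_antisym:
  assumes "\<And>a b c. lower w x a b c = - lower w x b a c"
  shows "transpose (eta ** coord_conn h w x mu) = - (eta ** coord_conn h w x mu)"
proof -
  have e: "(eta ** coord_conn h w x mu) $ a $ b = (\<Sum>c\<in>UNIV. lower w x a b c * h x $ c $ mu)" for a b
    by (simp add: matrix_matrix_mult_def coord_conn_def lower_def sum_distrib_left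
        sum_mult_sum_swap mult.assoc)
  have ab: "(eta ** coord_conn h w x mu) $ a $ b = - (eta ** coord_conn h w x mu) $ b $ a" for a b
    unfolding e by (simp add: assms[of a b] sum_negf)
  have "transpose (eta ** coord_conn h w x mu) $ a $ b = (- (eta ** coord_conn h w x mu)) $ a $ b" for a b
    using ab[of b a] by (simp add: transpose_def)
  then show ?thesis
    by (simp add: vec_eq_iff)
qed

text \<open>Here \<open>gv\<close> and \<open>gd\<close> are the values of \<open>g\<close> and \<open>g'\<close> at \<open>y\<close>.\<close>

lemma coord_conn_chi_derivative:
  fixes h :: "real^4 \<Rightarrow> real^4^4" and w :: "real^4 \<Rightarrow> 4 \<Rightarrow> 4 \<Rightarrow> 4 \<Rightarrow> real"
  assumes inv: "invertible (h y)"
    and h_eq: "\<And>a mu. pd (\<lambda>y. h y $ a $ mu) 3 y = gv * (l ** h y) $ a $ mu"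
    and w_eq: "\<And>a b c. pd (\<lambda>y. w y a b c) 3 y = (\<Sum>d\<in>UNIV. gv * l$a$d * w y d b c)
        - (\<Sum>d\<in>UNIV. w y a d c * (gv * l$d$b)) - (\<Sum>d\<in>UNIV. w y a b d * (gv * l$d$c))
        - matrix_inv (h y) $ 3 $ c * gd * l$a$b"
  shows "(\<chi> a b. \<Sum>c\<in>UNIV. pd (\<lambda>y. w y a b c) 3 y * h y $ c $ mu + w y a b c * pd (\<lambda>y. h y $ c $ mu) 3 y)
       = gv *\<^sub>R (l ** coord_conn h w y mu - coord_conn h w y mu ** l) - (if mu = 3 then gd else 0) *\<^sub>R l"
proof -
  let ?Om = "coord_conn h w y mu"
  have delta: "(\<Sum>c\<in>UNIV. matrix_inv (h y) $ 3 $ c * h y $ c $ mu) = (if mu = 3 then 1 else 0)"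
    using matrix_inv_inverse(2)[OF inv] by (simp add: vec_eq_iff matrix_matrix_mult_def mat_def)
  have "(\<Sum>c\<in>UNIV. pd (\<lambda>y. w y a b c) 3 y * h y $ c $ mu + w y a b c * pd (\<lambda>y. h y $ c $ mu) 3 y)
       = gv * (l ** ?Om) $ a $ b - gv * (?Om ** l) $ a $ b - (if mu = 3 then gd else 0) * l $ a $ b" for a b
  proof -
    define X where "X c = (\<Sum>d\<in>UNIV. gv * l$a$d * w y d b c)" for c
    define Y where "Y c = (\<Sum>d\<in>UNIV. w y a d c * (gv * l$d$b))" for c
    define Z where "Z c = (\<Sum>d\<in>UNIV. w y a b d * (gv * l$d$c))" for c
    define V where "V c = matrix_inv (h y) $ 3 $ c * gd * l$a$b" for c
    have "(\<Sum>c\<in>UNIV. pd (\<lambda>y. w y a b c) 3 y * h y $ c $ mu + w y a b c * pd (\<lambda>y. h y $ c $ mu) 3 y)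
        = (\<Sum>c\<in>UNIV. X c * h y $ c $ mu) - (\<Sum>c\<in>UNIV. Y c * h y $ c $ mu)
          - (\<Sum>c\<in>UNIV. Z c * h y $ c $ mu) - (\<Sum>c\<in>UNIV. V c * h y $ c $ mu)
          + (\<Sum>c\<in>UNIV. w y a b c * (gv * (l ** h y) $ c $ mu))"
      unfolding w_eq h_eq X_def[symmetric] Y_def[symmetric] Z_def[symmetric] V_def[symmetric]
      by (simp add: sum.distrib sum_subtractf algebra_simps)
    also have "(\<Sum>c\<in>UNIV. X c * h y $ c $ mu) = gv * (l ** ?Om) $ a $ b"
      unfolding X_def sum_mult_sum_swap
      by (simp add: matrix_matrix_mult_def coord_conn_def sum_distrib_left mult_ac)
    also have "(\<Sum>c\<in>UNIV. Y c * h y $ c $ mu) = gv * (?Om ** l) $ a $ b"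
      unfolding Y_def sum_mult_sum_swap
      by (simp add: matrix_matrix_mult_def coord_conn_def sum_distrib_left
          sum_distrib_right mult_ac)
    also have "(\<Sum>c\<in>UNIV. Z c * h y $ c $ mu) = (\<Sum>c\<in>UNIV. w y a b c * (gv * (l ** h y) $ c $ mu))"
      unfolding Z_def sum_mult_sum_swap
      by (simp add: matrix_matrix_mult_def sum_distrib_left mult_ac)
    also have "(\<Sum>c\<in>UNIV. V c * h y $ c $ mu) = gd * l$a$b * (\<Sum>c\<in>UNIV. matrix_inv (h y) $ 3 $ c * h y $ c $ mu)"
      by (simp add: V_def sum_distrib_left mult_ac)
    finally show ?thesis
      by (simp add: delta)
  qed
  then show ?thesis
    by (simp add: vec_eq_iff algebra_simps)
qed

lemma gauge_derivative_cancel: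
  fixes L Li l Om Om' :: "real^'n^'n"
  assumes "L ** l = l ** L" "L ** Li = mat 1"
    and "Om' = gv *\<^sub>R (l ** Om - Om ** l) - k *\<^sub>R l"
  shows "((- gv) *\<^sub>R (l ** L) ** Om + L ** Om') ** Li + (L ** Om) ** (gv *\<^sub>R (l ** Li)) + k *\<^sub>R l = 0"
proof -
  have "X ** L ** Li = X" for X :: "real^'n^'n"
    using assms(2) by (simp flip: matrix_mul_assoc)
  then show ?thesis
    unfolding assms(3) by (simp add: matrix_ring_simps assms(1) algebra_simps)
qed

lemma chi_indep_affine_frame_symmetry:
  fixes D :: "(real^4) set" and H :: "real^4 \<Rightarrow> real^4^4" and W :: "real^4 \<Rightarrow> 4 \<Rightarrow> 4 \<Rightarrow> 4 \<Rightarrow> real"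
    and l :: "real^4^4"
  assumes D: "open D" and H: "chi_indep D H" and W: "chi_indep D W"
  shows "affine_frame_symmetry D H
            (\<lambda>x a b c. W x a b c - frame_deriv H (\<lambda>y. \<epsilon> * y $ 3) c x * l $ a $ b)
            (\<lambda>x. axis 3 1) (\<lambda>x. 0) 0"
proof -
  let ?w = "\<lambda>x a b c. W x a b c - frame_deriv H (\<lambda>y. \<epsilon> * y $ 3) c x * l $ a $ b"
  have "lorentz_alg (0::real^4^4)"
    by (simp add: lorentz_alg_def transpose_def vec_eq_iff)
  moreover have "lie_coframe (\<lambda>x. axis 3 1) H x = (0::real) *\<^sub>R (0 ** H x)" if "x \<in> D" for x
  proof -
    have "pd (\<lambda>y. H y $ a $ mu) 3 x = 0" for a mu
      by (rule pd_chi_eq_0_if_chi_indep[OF D chi_indep_comp[OF H] that])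
    then show ?thesis by (simp add: vec_eq_iff lie_coframe_chi)
  qed
  moreover have "lie_conn (\<lambda>x. axis 3 1) H ?w (\<lambda>x. 0) 0 x a b c = 0" if "x \<in> D" for x a b c
  proof -
    define F where "F p = fst p a b c - (\<Sum>mu\<in>UNIV. matrix_inv (snd p) $ mu $ c * (if mu = 3 then \<epsilon> else 0)) * l $ a $ b"
      for p :: "(4 \<Rightarrow> 4 \<Rightarrow> 4 \<Rightarrow> real) \<times> (real^4^4)"
    have "(\<lambda>y. ?w y a b c) = (\<lambda>y. F (W y, H y))"
      by (simp add: fun_eq_iff F_def frame_deriv_def dual_def pd_scaled_chi)
    then have "chi_indep D (\<lambda>y. ?w y a b c)"
      using chi_indep_comp[OF chi_indep_pair[OF W H]] by simp
    from pd_chi_eq_0_if_chi_indep[OF D this that] show ?thesis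
      by (simp add: lie_conn_chi frame_deriv_def)
  qed
  ultimately show ?thesis
    unfolding affine_frame_symmetry_def by auto
qed

section \<open>Gauging away the \<open>\<chi>\<close>-dependence\<close>

locale chi_symmetric_geometry =
  fixes D :: "(real^4) set"
    and h :: "real^4 \<Rightarrow> real^4^4"
    and w :: "real^4 \<Rightarrow> 4 \<Rightarrow> 4 \<Rightarrow> 4 \<Rightarrow> real"
    and g :: "real \<Rightarrow> real"
    and l :: "real^4^4"
  assumes D_open: "open D"
    and D_slices: "\<forall>x\<in>D. is_interval {t. chi_shift x t \<in> D}"
    and h_inv: "\<forall>x\<in>D. invertible (h x)"
    and h_diff: "\<forall>a mu. (\<lambda>y. h y $ a $ mu) differentiable_on D"
    and w_diff: "\<forall>a b c. (\<lambda>y. w y a b c) differentiable_on D"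
    and w_metric: "\<forall>x\<in>D. \<forall>a b c. lower w x a b c = - lower w x b a c"
    and g_diff: "\<forall>x\<in>D. g differentiable (at (x $ 3))"
    and sym: "affine_frame_symmetry D h w (\<lambda>x. axis 3 1) (\<lambda>x. g (x $ 3)) l"
begin

lemma lorentz_alg_l: "lorentz_alg l"
  using sym unfolding affine_frame_symmetry_def by blast

lemma h_chi_derivative:
  assumes "y \<in> D"
  shows "pd (\<lambda>y. h y $ a $ mu) 3 y = g (y $ 3) * (l ** h y) $ a $ mu"
proof -
  have "lie_coframe (\<lambda>x. axis 3 1) h y = g (y $ 3) *\<^sub>R (l ** h y)"
    using sym assms unfolding affine_frame_symmetry_def by blast
  from arg_cong[OF this, of "\<lambda>X. X $ a $ mu"] show ?thesis
    by (simp add: lie_coframe_chi)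
qed

lemma w_chi_derivative:
  assumes "y \<in> D"
  shows "pd (\<lambda>y. w y a b c) 3 y = (\<Sum>d\<in>UNIV. g (y $ 3) * l$a$d * w y d b c)
        - (\<Sum>d\<in>UNIV. w y a d c * (g (y $ 3) * l$d$b)) - (\<Sum>d\<in>UNIV. w y a b d * (g (y $ 3) * l$d$c))
        - matrix_inv (h y) $ 3 $ c * deriv g (y $ 3) * l$a$b"
proof -
  have "g differentiable (at (y $ 3))"
    using g_diff assms by blast
  then have "frame_deriv h (\<lambda>x. g (x $ 3)) c y
      = (\<Sum>mu\<in>UNIV. if mu = 3 then matrix_inv (h y) $ mu $ c * deriv g (y $ 3) else 0)"
    unfolding frame_deriv_def dual_def by (intro sum.cong) (auto simp: pd_comp_chi)
  then have "frame_deriv h (\<lambda>x. g (x $ 3)) c y = matrix_inv (h y) $ 3 $ c * deriv g (y $ 3)"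
    by simp
  moreover have "lie_conn (\<lambda>x. axis 3 1) h w (\<lambda>x. g (x $ 3)) l y a b c = 0"
    using sym assms unfolding affine_frame_symmetry_def by blast
  ultimately show ?thesis
    by (simp add: lie_conn_chi)
qed

lemma coord_conn_slice_derivative:
  assumes "chi_shift x s \<in> D"
  shows "has_matrix_derivative (\<lambda>s. coord_conn h w (chi_shift x s) mu)
     (g (x $ 3 + s) *\<^sub>R (l ** coord_conn h w (chi_shift x s) mu - coord_conn h w (chi_shift x s) mu ** l)
      - (if mu = 3 then deriv g (x $ 3 + s) else 0) *\<^sub>R l) s"
proof -
  define y where "y = chi_shift x s"
  have y: "y \<in> D" "y $ 3 = x $ 3 + s"
    using assms chi_shift_nth_3 unfolding y_def by auto
  have "has_matrix_derivative (\<lambda>s. coord_conn h w (chi_shift x s) mu)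
    (\<chi> a b. \<Sum>c\<in>UNIV. pd (\<lambda>y. w y a b c) 3 y * h y $ c $ mu + w y a b c * pd (\<lambda>y. h y $ c $ mu) 3 y) s"
    unfolding has_matrix_derivative_def
  proof (intro allI)
    fix a b
    have "((\<lambda>s. \<Sum>c\<in>UNIV. w (chi_shift x s) a b c * h (chi_shift x s) $ c $ mu) has_real_derivative
        (\<Sum>c\<in>UNIV. pd (\<lambda>y. w y a b c) 3 y * h y $ c $ mu + w y a b c * pd (\<lambda>y. h y $ c $ mu) 3 y)) (at s)"
    proof (rule DERIV_sum)
      fix c
      have "(\<lambda>y. w y a b c) differentiable (at y)" "(\<lambda>y. h y $ c $ mu) differentiable (at y)"
        using w_diff h_diff D_open y(1) differentiable_on_eq_differentiable_at by blast+
      from this[unfolded y_def, THEN has_real_derivative_chi_shift]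
      have "((\<lambda>s. w (chi_shift x s) a b c) has_real_derivative pd (\<lambda>y. w y a b c) 3 y) (at s)"
        "((\<lambda>s. h (chi_shift x s) $ c $ mu) has_real_derivative pd (\<lambda>y. h y $ c $ mu) 3 y) (at s)"
        by (simp_all add: y_def)
      from DERIV_mult'[OF this]
      show "((\<lambda>s. w (chi_shift x s) a b c * h (chi_shift x s) $ c $ mu) has_real_derivative
        pd (\<lambda>y. w y a b c) 3 y * h y $ c $ mu + w y a b c * pd (\<lambda>y. h y $ c $ mu) 3 y) (at s)"
        by (simp add: y_def add.commute mult.commute)
    qed
    then show "((\<lambda>s. coord_conn h w (chi_shift x s) mu $ a $ b) has_real_derivative
        (\<chi> a b. \<Sum>c\<in>UNIV. pd (\<lambda>y. w y a b c) 3 y * h y $ c $ mu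
                          + w y a b c * pd (\<lambda>y. h y $ c $ mu) 3 y) $ a $ b) (at s)"
      by (simp add: coord_conn_def)
  qed
  moreover have "invertible (h y)" using h_inv y(1) by blast
  moreover note coord_conn_chi_derivative[OF this h_chi_derivative[OF y(1)] w_chi_derivative[OF y(1)]]
  ultimately show ?thesis
    unfolding y(2) by (simp only: y_def)
qed

definition chi_range :: "real set" where
  "chi_range = (\<lambda>x. x $ 3) ` D"

lemma nth_3_in_chi_range: "x \<in> D \<Longrightarrow> x $ 3 \<in> chi_range"
  by (simp add: chi_range_def)

definition chi_primitive :: "real \<Rightarrow> real" where
  "chi_primitive = (SOME G. \<forall>s\<in>chi_range. (G has_real_derivative g s) (at s))"

lemma chi_primitive_derivative:
  assumes "s \<in> chi_range"
  shows "(chi_primitive has_real_derivative g s) (at s)"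
proof -
  have "open chi_range"
    unfolding chi_range_def by (rule open_image_vec_nth[OF D_open])
  moreover have "continuous_on chi_range g"
    using g_diff differentiable_imp_continuous_within
    by (auto simp: chi_range_def intro!: continuous_at_imp_continuous_on)
  ultimately have "\<exists>G. \<forall>s\<in>chi_range. (G has_real_derivative g s) (at s)"
    by (rule exists_primitive_on_open)
  from someI_ex[OF this] assms show ?thesis
    unfolding chi_primitive_def by blast
qed

definition gauge :: "real^4 \<Rightarrow> real^4^4" where
  "gauge y = mat_exp l (- chi_primitive (y $ 3))"

definition gauge_inv :: "real^4 \<Rightarrow> real^4^4" where
  "gauge_inv y = mat_exp l (chi_primitive (y $ 3))"

lemma gauge_mult_gauge_inv: "gauge y ** gauge_inv y = mat 1"
  using mat_exp_minus[of l "- chi_primitive (y $ 3)"] by (simp add: gauge_def gauge_inv_def)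

lemma matrix_inv_gauge: "matrix_inv (gauge y) = gauge_inv y"
  by (rule matrix_inv_unique[OF gauge_mult_gauge_inv])
     (use mat_exp_minus[of l "chi_primitive (y $ 3)"] in \<open>simp add: gauge_def gauge_inv_def\<close>)

lemma gauge_commute: "gauge y ** l = l ** gauge y"
  unfolding gauge_def by (simp add: mat_exp_commute)

lemma lorentz_mat_gauge: "lorentz_mat (gauge y)"
  unfolding gauge_def by (rule lorentz_mat_mat_exp[OF lorentz_alg_l])

lemma eta_mult_gauge: "eta ** gauge y = transpose (gauge_inv y) ** eta"
proof -
  have "transpose (gauge y) ** eta = (transpose (gauge y) ** eta ** gauge y) ** gauge_inv y"
    by (simp flip: matrix_mul_assoc add: gauge_mult_gauge_inv)
  also have "\<dots> = eta ** gauge_inv y"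
    using lorentz_mat_gauge by (simp add: lorentz_mat_def)
  finally have "transpose (transpose (gauge y) ** eta) = transpose (eta ** gauge_inv y)" by simp
  then show ?thesis by (simp add: matrix_transpose_mul)
qed

lemma gauge_chi_derivative:
  assumes "s \<in> chi_range"
  shows "has_matrix_derivative (\<lambda>s. mat_exp l (- chi_primitive s))
           ((- g s) *\<^sub>R (l ** mat_exp l (- chi_primitive s))) s"
  using chi_primitive_derivative[OF assms, THEN DERIV_minus]
  by (rule has_matrix_derivative_chain[OF has_matrix_derivative_mat_exp])

lemma gauge_inv_chi_derivative:
  assumes "s \<in> chi_range"
  shows "has_matrix_derivative (\<lambda>s. mat_exp l (chi_primitive s))
           (g s *\<^sub>R (l ** mat_exp l (chi_primitive s))) s"
  by (rule has_matrix_derivative_chain[OF has_matrix_derivative_mat_exp chi_primitive_derivative[OF assms]])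

lemma gauge_differentiable:
  assumes "x \<in> D"
  shows "(\<lambda>y. gauge y $ a $ b) differentiable (at x)"
proof -
  have "((\<lambda>s. mat_exp l (- chi_primitive s) $ a $ b) has_real_derivative
      ((- g (x $ 3)) *\<^sub>R (l ** mat_exp l (- chi_primitive (x $ 3)))) $ a $ b) (at (x $ 3))"
    using gauge_chi_derivative[OF nth_3_in_chi_range[OF assms]] unfolding has_matrix_derivative_def by blast
  then have "(\<lambda>s. mat_exp l (- chi_primitive s) $ a $ b) differentiable (at ((\<lambda>y::real^4. y $ 3) x))"
    using real_differentiable_def by auto
  from differentiable_chain_at[OF bounded_linear_imp_differentiable[OF bounded_linear_vec_nth] this]
  show ?thesis by (simp add: o_def gauge_def)
qed

lemma pd_gauge_inv:
  assumes "x \<in> D"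
  shows "pd (\<lambda>y. gauge_inv y $ d $ b) mu x = (if mu = 3 then g (x $ 3) * (l ** gauge_inv x) $ d $ b else 0)"
proof -
  have dd: "((\<lambda>s. mat_exp l (chi_primitive s) $ d $ b) has_real_derivative
      (g (x $ 3) *\<^sub>R (l ** mat_exp l (chi_primitive (x $ 3)))) $ d $ b) (at (x $ 3))"
    using gauge_inv_chi_derivative[OF nth_3_in_chi_range[OF assms]] unfolding has_matrix_derivative_def by blast
  then have "(\<lambda>s. mat_exp l (chi_primitive s) $ d $ b) differentiable (at (x $ 3))"
    using real_differentiable_def by auto
  from pd_comp_chi[OF this, of mu] DERIV_imp_deriv[OF dd]
  show ?thesis by (simp add: gauge_inv_def)
qed

lemma gauge_slice_derivative:
  assumes "chi_shift x s \<in> D"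
  shows "has_matrix_derivative (\<lambda>s. gauge (chi_shift x s))
           ((- g (x $ 3 + s)) *\<^sub>R (l ** gauge (chi_shift x s))) s"
proof -
  have "((\<lambda>s. x $ 3 + s) has_real_derivative 1) (at s)"
    by (auto intro!: derivative_eq_intros)
  from has_matrix_derivative_chain[OF gauge_chi_derivative this]
  show ?thesis
    using nth_3_in_chi_range[OF assms] by (simp add: gauge_def chi_shift_nth_3)
qed

lemma gauge_inv_slice_derivative:
  assumes "chi_shift x s \<in> D"
  shows "has_matrix_derivative (\<lambda>s. gauge_inv (chi_shift x s))
           (g (x $ 3 + s) *\<^sub>R (l ** gauge_inv (chi_shift x s))) s"
proof -
  have "((\<lambda>s. x $ 3 + s) has_real_derivative 1) (at s)"
    by (auto intro!: derivative_eq_intros)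
  from has_matrix_derivative_chain[OF gauge_inv_chi_derivative this]
  show ?thesis
    using nth_3_in_chi_range[OF assms] by (simp add: gauge_inv_def chi_shift_nth_3)
qed

lemma h_slice_derivative:
  assumes "chi_shift x s \<in> D"
  shows "has_matrix_derivative (\<lambda>s. h (chi_shift x s)) (g (x $ 3 + s) *\<^sub>R (l ** h (chi_shift x s))) s"
  unfolding has_matrix_derivative_def
proof (intro allI)
  fix a mu
  have "(\<lambda>y. h y $ a $ mu) differentiable (at (chi_shift x s))"
    using h_diff D_open assms differentiable_on_eq_differentiable_at by blast
  from has_real_derivative_chi_shift[OF this]
  show "((\<lambda>s. h (chi_shift x s) $ a $ mu) has_real_derivative
      (g (x $ 3 + s) *\<^sub>R (l ** h (chi_shift x s))) $ a $ mu) (at s)"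
    by (simp add: h_chi_derivative[OF assms] chi_shift_nth_3)
qed

lemma chi_indep_gauge_coframe: "chi_indep D (gauge_coframe gauge h)"
proof (rule chi_indep_if_slice_derivative_zero[OF D_slices])
  fix x s assume s: "chi_shift x s \<in> D"
  let ?G = "gauge (chi_shift x s)" and ?h = "h (chi_shift x s)" and ?g = "g (x $ 3 + s)"
  have "has_matrix_derivative (\<lambda>s. gauge_coframe gauge h (chi_shift x s))
      ((- ?g) *\<^sub>R (l ** ?G) ** ?h + ?G ** (?g *\<^sub>R (l ** ?h))) s"
    unfolding gauge_coframe_def
    by (intro has_matrix_derivative_mult gauge_slice_derivative h_slice_derivative s)
  moreover have "(- ?g) *\<^sub>R (l ** ?G) ** ?h + ?G ** (?g *\<^sub>R (l ** ?h)) = 0"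
    by (simp only: matrix_ring_simps gauge_commute) (simp add: algebra_simps)
  ultimately show "has_matrix_derivative (\<lambda>s. gauge_coframe gauge h (chi_shift x s)) 0 s"
    by simp
qed

definition gauge_coord_conn :: "real^4 \<Rightarrow> 4 \<Rightarrow> real^4^4" where
  "gauge_coord_conn y mu = gauge y ** coord_conn h w y mu ** gauge_inv y
     + (\<chi> a b. \<Sum>d\<in>UNIV. gauge y $ a $ d * pd (\<lambda>y. gauge_inv y $ d $ b) mu y)"

lemma gauge_conn_eq:
  "gauge_conn gauge h w y a b c
     = (\<Sum>mu\<in>UNIV. gauge_coord_conn y mu $ a $ b * matrix_inv (gauge_coframe gauge h y) $ mu $ c)"
  unfolding gauge_conn_def gauge_coord_conn_def dual_def matrix_inv_gauge by simp

lemma gauge_coord_conn_eq: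
  assumes "x \<in> D"
  shows "gauge_coord_conn x mu
           = gauge x ** coord_conn h w x mu ** gauge_inv x + (if mu = 3 then g (x $ 3) else 0) *\<^sub>R l"
proof (cases "mu = 3")
  case True
  have "(\<chi> a b. \<Sum>d\<in>UNIV. gauge x $ a $ d * pd (\<lambda>y. gauge_inv y $ d $ b) mu x)
      = g (x $ 3) *\<^sub>R (gauge x ** (l ** gauge_inv x))"
    using True by (simp add: pd_gauge_inv[OF assms] vec_eq_iff matrix_matrix_mult_def sum_distrib_left mult_ac)
  also have "gauge x ** (l ** gauge_inv x) = l"
    by (simp add: matrix_mul_assoc gauge_commute) (simp flip: matrix_mul_assoc add: gauge_mult_gauge_inv)
  finally show ?thesis using True by (simp add: gauge_coord_conn_def)
next
  case False
  then show ?thesis by (simp add: gauge_coord_conn_def pd_gauge_inv[OF assms] vec_eq_iff)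
qed

lemma lower_gauge_conn_antisym:
  assumes "x \<in> D"
  shows "lower (gauge_conn gauge h w) x a b c = - lower (gauge_conn gauge h w) x b a c"
proof (rule lower_antisym_if_eta_antisym[OF gauge_conn_eq])
  fix mu
  have "eta ** gauge_coord_conn x mu
      = transpose (gauge_inv x) ** (eta ** coord_conn h w x mu) ** gauge_inv x
        + (if mu = 3 then g (x $ 3) else 0) *\<^sub>R (eta ** l)"
    unfolding gauge_coord_conn_eq[OF assms]
    by (simp add: matrix_add_ldistrib matrix_scaleR_right matrix_mul_assoc eta_mult_gauge)
  moreover have "transpose (eta ** l) = - (eta ** l)"
    using lorentz_alg_l by (simp add: lorentz_alg_def)
  moreover have "transpose (eta ** coord_conn h w x mu) = - (eta ** coord_conn h w x mu)"
    using w_metric assms by (intro eta_coord_conn_antisym) blast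
  ultimately show "transpose (eta ** gauge_coord_conn x mu) = - (eta ** gauge_coord_conn x mu)"
    using eta_antisym_congruence[of "eta ** coord_conn h w x mu" "gauge_inv x"]
    by (simp add: transpose_add transpose_scalar)
qed

lemma gauge_coord_conn_slice_derivative:
  assumes "chi_shift x s \<in> D"
  shows "has_matrix_derivative (\<lambda>s. gauge_coord_conn (chi_shift x s) mu) 0 s"
proof -
  let ?G = "gauge (chi_shift x s)" and ?Li = "gauge_inv (chi_shift x s)"
    and ?Om = "coord_conn h w (chi_shift x s) mu" and ?g = "g (x $ 3 + s)"
    and ?k = "if mu = 3 then deriv g (x $ 3 + s) else 0"
  have inhom: "has_matrix_derivative (\<lambda>s. (if mu = 3 then g (x $ 3 + s) else 0) *\<^sub>R l) (?k *\<^sub>R l) s"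
  proof (cases "mu = 3")
    case True
    have "(g has_real_derivative deriv g (x $ 3 + s)) (at (x $ 3 + s))"
      using g_diff assms chi_shift_nth_3 DERIV_deriv_iff_real_differentiable by force
    moreover have "((\<lambda>s. x $ 3 + s) has_real_derivative 1) (at s)"
      by (auto intro!: derivative_eq_intros)
    ultimately have "((\<lambda>s. g (x $ 3 + s)) has_real_derivative deriv g (x $ 3 + s)) (at s)"
      using DERIV_chain2 by fastforce
    from has_matrix_derivative_scaleR[OF this has_matrix_derivative_const[of l s]] True
    show ?thesis by simp
  next
    case False
    then show ?thesis using has_matrix_derivative_const[of "0::real^4^4" s] by simp
  qed
  have "has_matrix_derivative (\<lambda>s. gauge (chi_shift x s) ** coord_conn h w (chi_shift x s) mu
          ** gauge_inv (chi_shift x s) + (if mu = 3 then g (x $ 3 + s) else 0) *\<^sub>R l)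
      (((- ?g) *\<^sub>R (l ** ?G) ** ?Om + ?G ** (?g *\<^sub>R (l ** ?Om - ?Om ** l) - ?k *\<^sub>R l)) ** ?Li
       + (?G ** ?Om) ** (?g *\<^sub>R (l ** ?Li)) + ?k *\<^sub>R l) s"
    by (rule has_matrix_derivative_add[OF has_matrix_derivative_mult[OF has_matrix_derivative_mult[OF
          gauge_slice_derivative[OF assms] coord_conn_slice_derivative[OF assms]]
          gauge_inv_slice_derivative[OF assms]] inhom])
  moreover have "((- ?g) *\<^sub>R (l ** ?G) ** ?Om + ?G ** (?g *\<^sub>R (l ** ?Om - ?Om ** l) - ?k *\<^sub>R l)) ** ?Li
       + (?G ** ?Om) ** (?g *\<^sub>R (l ** ?Li)) + ?k *\<^sub>R l = 0"
    by (rule gauge_derivative_cancel[OF gauge_commute gauge_mult_gauge_inv refl])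
  ultimately have "has_matrix_derivative (\<lambda>s. gauge (chi_shift x s) ** coord_conn h w (chi_shift x s) mu
          ** gauge_inv (chi_shift x s) + (if mu = 3 then g (x $ 3 + s) else 0) *\<^sub>R l) 0 s"
    by simp
  then show ?thesis
  proof (rule has_matrix_derivative_transform_within_open)
    show "open {s. chi_shift x s \<in> D}" by (rule open_chi_slice[OF D_open])
  qed (use assms in \<open>auto simp: gauge_coord_conn_eq chi_shift_nth_3\<close>)
qed

lemma chi_indep_gauge_conn: "chi_indep D (gauge_conn gauge h w)"
proof -
  have "chi_indep D (\<lambda>y. gauge_coord_conn y mu)" for mu
    by (rule chi_indep_if_slice_derivative_zero[OF D_slices gauge_coord_conn_slice_derivative])
  then have "chi_indep D (\<lambda>y. (gauge_coord_conn y, gauge_coframe gauge h y))"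
    using chi_indep_gauge_coframe unfolding chi_indep_def by (simp add: fun_eq_iff)
  from chi_indep_comp[OF this, of "\<lambda>(M, H) a b c. \<Sum>mu\<in>UNIV. M mu $ a $ b * matrix_inv H $ mu $ c"]
  show ?thesis
    by (simp add: gauge_conn_eq[abs_def])
qed

lemma gauge_differentiable_on: "(\<lambda>y. gauge y $ a $ b) differentiable_on D"
  using gauge_differentiable by (auto intro: differentiable_at_imp_differentiable_on)

theorem gauge_normal_form:
  shows "\<exists>L H W (\<epsilon>::real).
      (\<forall>x\<in>D. lorentz_mat (L x))
    \<and> (\<forall>a b. (\<lambda>y. L y $ a $ b) differentiable_on D)
    \<and> \<epsilon> \<in> {0, 1}
    \<and> chi_indep D H \<and> chi_indep D W
    \<and> (\<forall>x\<in>D. \<forall>a b c. lower W x a b c = - lower W x b a c)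
    \<and> (\<forall>x\<in>D. gauge_coframe L h x = H x)
    \<and> (\<forall>x\<in>D. \<forall>a b c. gauge_conn L h w x a b c
           = W x a b c - frame_deriv H (\<lambda>y. \<epsilon> * y $ 3) c x * l $ a $ b)"
proof (intro exI conjI)
  show "\<forall>x\<in>D. lorentz_mat (gauge x)" by (simp add: lorentz_mat_gauge)
  show "\<forall>a b. (\<lambda>y. gauge y $ a $ b) differentiable_on D" by (simp add: gauge_differentiable_on)
  show "(0::real) \<in> {0, 1}" by simp
  show "chi_indep D (gauge_coframe gauge h)" by (rule chi_indep_gauge_coframe)
  show "chi_indep D (gauge_conn gauge h w)" by (rule chi_indep_gauge_conn)
  show "\<forall>x\<in>D. \<forall>a b c. lower (gauge_conn gauge h w) x a b c = - lower (gauge_conn gauge h w) x b a c"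
    using lower_gauge_conn_antisym by blast
  show "\<forall>x\<in>D. gauge_coframe gauge h x = gauge_coframe gauge h x" by simp
  show "\<forall>x\<in>D. \<forall>a b c. gauge_conn gauge h w x a b c
      = gauge_conn gauge h w x a b c - frame_deriv (gauge_coframe gauge h) (\<lambda>y. 0 * y $ 3) c x * l $ a $ b"
    by (simp add: frame_deriv_def)
qed

end

theorem mainTheorem4:
  fixes D :: "(real^4) set"
    and h :: "real^4 \<Rightarrow> real^4^4"
    and w :: "real^4 \<Rightarrow> 4 \<Rightarrow> 4 \<Rightarrow> 4 \<Rightarrow> real"
    and g :: "real \<Rightarrow> real"
    and l :: "real^4^4"
  assumes D_open: "open D"
    and D_slices: "\<forall>x\<in>D. is_interval {t. chi_shift x t \<in> D}"
    and h_inv: "\<forall>x\<in>D. invertible (h x)"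
    and h_diff: "\<forall>a mu. (\<lambda>y. h y $ a $ mu) differentiable_on D"
    and w_diff: "\<forall>a b c. (\<lambda>y. w y a b c) differentiable_on D"
    and w_metric: "\<forall>x\<in>D. \<forall>a b c. lower w x a b c = - lower w x b a c"
    and g_diff: "\<forall>x\<in>D. g differentiable (at (x $ 3))"
    and sym: "affine_frame_symmetry D h w (\<lambda>x. axis 3 1) (\<lambda>x. g (x $ 3)) l"
  shows
    "(\<exists>L H W (\<epsilon>::real).
        (\<forall>x\<in>D. lorentz_mat (L x))
      \<and> (\<forall>a b. (\<lambda>y. L y $ a $ b) differentiable_on D)
      \<and> \<epsilon> \<in> {0, 1}
      \<and> chi_indep D H \<and> chi_indep D W
      \<and> (\<forall>x\<in>D. \<forall>a b c. lower W x a b c = - lower W x b a c)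
      \<and> (\<forall>x\<in>D. gauge_coframe L h x = H x)
      \<and> (\<forall>x\<in>D. \<forall>a b c. gauge_conn L h w x a b c
             = W x a b c - frame_deriv H (\<lambda>y. \<epsilon> * y $ 3) c x * l $ a $ b))
   \<and> (\<forall>H W (\<epsilon>::real).
        (\<forall>x\<in>D. invertible (H x)) \<and> chi_indep D H \<and> chi_indep D W
        \<and> (\<forall>x\<in>D. \<forall>a b c. lower W x a b c = - lower W x b a c) \<and> \<epsilon> \<in> {0, 1}
        \<longrightarrow> (\<exists>f l'. affine_frame_symmetry D H
                (\<lambda>x a b c. W x a b c - frame_deriv H (\<lambda>y. \<epsilon> * y $ 3) c x * l $ a $ b)
                (\<lambda>x. axis 3 1) f l'))"
proof -
  have "chi_symmetric_geometry D h w g l"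
    using assms by unfold_locales
  from conjI[OF chi_symmetric_geometry.gauge_normal_form[OF this]] show ?thesis
    by (blast intro: chi_indep_affine_frame_symmetry[OF D_open])
qed

end
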